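(* Let $R$ be an integral domain of characteristic zero and let $n$ be a positive integer. If $d_1,\dots,d_n$ are nonzero derivations on $R$, then $d_1\circ\cdots\circ d_n\in\mathcal{D}^n(R)\setminus\mathcal{D}^{n-1}(R)$, i.e. it is a derivation of order exactly $n$.
   Context: All rings are commutative with unit. A derivation on $R$ is a map $d\colon R\to R$ with $d(x+y)=d(x)+d(y)$ and $d(xy)=d(x)y+d(y)x$. Inductively: $\mathcal{D}^{-1}(R)=\emptyset$, $\mathcal{D}^0(R)=\{0\}$; for $n>0$, $D\in\mathcal{D}^n(R)$ (derivation of order at most $n$) if $D$ is additive and $D(xy)-D(x)y-D(y)x=B(x,y)$ for all $x,y\in R$, where for each fixed value of one variable, $B$ is a member of $\mathcal{D}^{n-1}(R)$ in the other variable. *)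

theory Defs
  imports Main
begin

definition is_derivation :: "('a::comm_ring_1 \<Rightarrow> 'a) \<Rightarrow> bool" where
  "is_derivation d \<longleftrightarrow> (\<forall>x y. d (x + y) = d x + d y) \<and>
                          (\<forall>x y. d (x * y) = d x * y + d y * x)"

text \<open>derivs n = the set D^n(R) of derivations of order at most n (n \<ge> 0);
  D^{-1} = {} is not needed since D^0 = {0} is the base case.\<close>
fun derivs :: "nat \<Rightarrow> ('a::comm_ring_1 \<Rightarrow> 'a) set" where
  "derivs 0 = {\<lambda>x. 0}"
| "derivs (Suc n) = {D. (\<forall>x y. D (x + y) = D x + D y) \<and>
     (\<forall>x. (\<lambda>y. D (x * y) - D x * y - D y * x) \<in> derivs n) \<and>
     (\<forall>y. (\<lambda>x. D (x * y) - D x * y - D y * x) \<in> derivs n)}"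

end

theory Submission
  imports Defs
begin

text \<open>Let \<open>B D x y = D (x y) - D x \<cdot> y - D y \<cdot> x\<close> be the Leibniz defect of \<open>D\<close>. For a
  derivation \<open>d\<close> one has \<open>B (d \<circ> F) x y = F x \<cdot> d y + d x \<cdot> F y + d (B F x y)\<close>, so composing
  with a derivation raises the order by at most one. Conversely, applying \<open>F \<mapsto> B F x\<close>
  \<open>n - 1\<close> times to \<open>d\<^sub>1 \<circ> \<dots> \<circ> d\<^sub>n\<close> and evaluating at \<open>x\<close> gives \<open>n! \<cdot> d\<^sub>1 x \<cdots> d\<^sub>n x\<close>, whereas the
  same iteration annihilates every derivation of order at most \<open>n - 1\<close>. In a domain of
  characteristic zero this value is nonzero for an \<open>x\<close> with all \<open>d\<^sub>i x \<noteq> 0\<close>, and such an \<open>x\<close>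
  exists because the \<open>d\<^sub>i\<close> are additive and nonzero.\<close>

definition leibniz_defect :: "('a::comm_ring_1 \<Rightarrow> 'a) \<Rightarrow> 'a \<Rightarrow> 'a \<Rightarrow> 'a" where
  "leibniz_defect D x y = D (x * y) - D x * y - D y * x"

lemma derivs_Suc_iff:
  "D \<in> derivs (Suc n) \<longleftrightarrow>
     (\<forall>x y. D (x + y) = D x + D y) \<and> (\<forall>x. leibniz_defect D x \<in> derivs n)"
proof -
  have "(\<lambda>x. D (x * y) - D x * y - D y * x) = leibniz_defect D y" for y
    by (auto simp: fun_eq_iff leibniz_defect_def algebra_simps)
  then show ?thesis
    by (simp add: leibniz_defect_def[abs_def])
qed

declare derivs.simps(2) [simp del]

lemma leibniz_defect_add:
  "leibniz_defect (\<lambda>y. F y + G y) x y = leibniz_defect F x y + leibniz_defect G x y"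
  by (simp add: leibniz_defect_def algebra_simps)

lemma leibniz_defect_scale:
  "leibniz_defect (\<lambda>y. c * F y) x y = c * leibniz_defect F x y"
  by (simp add: leibniz_defect_def algebra_simps)

lemma derivation_add: "is_derivation d \<Longrightarrow> d (a + b) = d a + d b"
  by (simp add: is_derivation_def)

lemma derivation_mult: "is_derivation d \<Longrightarrow> d (a * b) = d a * b + d b * a"
  by (simp add: is_derivation_def)

lemma derivation_zero: "is_derivation d \<Longrightarrow> d 0 = 0"
  using derivation_add[of d 0 0] by simp

lemma leibniz_defect_derivation: "is_derivation d \<Longrightarrow> leibniz_defect d x y = 0"
  by (simp add: leibniz_defect_def derivation_mult)

lemma leibniz_defect_comp_derivation:
  assumes "is_derivation d"
  shows "leibniz_defect (\<lambda>y. d (F y)) x y = F x * d y + d x * F y + d (leibniz_defect F x y)"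
proof -
  have "F (x * y) = F x * y + F y * x + leibniz_defect F x y"
    by (simp add: leibniz_defect_def)
  then have "d (F (x * y)) = d (F x) * y + F x * d y + (d (F y) * x + F y * d x)
      + d (leibniz_defect F x y)"
    using assms by (simp add: derivation_add derivation_mult algebra_simps)
  then show ?thesis
    by (simp add: leibniz_defect_def algebra_simps)
qed

lemma zero_in_derivs: "(\<lambda>_. 0) \<in> derivs k"
  by (induction k) (simp_all add: derivs_Suc_iff leibniz_defect_def[abs_def])

lemma derivs_add: "D \<in> derivs k \<Longrightarrow> E \<in> derivs k \<Longrightarrow> (\<lambda>y. D y + E y) \<in> derivs k"
proof (induction k arbitrary: D E)
  case (Suc k)
  then show ?case
    by (simp add: derivs_Suc_iff leibniz_defect_add[abs_def] algebra_simps)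
qed simp

lemma derivs_scale: "D \<in> derivs k \<Longrightarrow> (\<lambda>y. c * D y) \<in> derivs k"
proof (induction k arbitrary: D)
  case (Suc k)
  then show ?case
    by (simp add: derivs_Suc_iff leibniz_defect_scale[abs_def] distrib_left)
qed simp

lemma derivs_subset_Suc: "derivs k \<subseteq> derivs (Suc k)"
proof (induction k)
  case 0
  show ?case using zero_in_derivs[of 1] by simp
next
  case (Suc k)
  show ?case
    using Suc.IH unfolding subset_iff derivs_Suc_iff[of _ k] derivs_Suc_iff[of _ "Suc k"]
    by blast
qed

lemma derivs_mono: "m \<le> k \<Longrightarrow> derivs m \<subseteq> derivs k"
  by (rule lift_Suc_mono_le[of derivs]) (use derivs_subset_Suc in auto)

lemma derivation_in_derivs_1:
  assumes "is_derivation d"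
  shows "d \<in> derivs 1"
proof -
  have "leibniz_defect d x = (\<lambda>_. 0)" for x
    using assms by (simp add: fun_eq_iff leibniz_defect_derivation)
  with assms show ?thesis
    unfolding One_nat_def derivs_Suc_iff by (simp add: is_derivation_def)
qed

lemma derivation_comp_derivs:
  assumes d: "is_derivation d"
  shows "D \<in> derivs k \<Longrightarrow> (\<lambda>y. d (D y)) \<in> derivs (Suc k)"
proof (induction k arbitrary: D)
  case 0
  then show ?case
    using zero_in_derivs by (simp add: derivation_zero[OF d])
next
  case (Suc k)
  have "leibniz_defect (\<lambda>y. d (D y)) x \<in> derivs (Suc k)" for x
  proof -
    have "d \<in> derivs (Suc k)"
      using derivs_mono[of 1 "Suc k"] derivation_in_derivs_1[OF d] by auto
    then have "(\<lambda>y. D x * d y + d x * D y) \<in> derivs (Suc k)"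
      using Suc.prems by (intro derivs_add derivs_scale)
    moreover have "(\<lambda>y. d (leibniz_defect D x y)) \<in> derivs (Suc k)"
      using Suc.prems by (intro Suc.IH) (simp add: derivs_Suc_iff)
    ultimately have "(\<lambda>y. D x * d y + d x * D y + d (leibniz_defect D x y)) \<in> derivs (Suc k)"
      by (rule derivs_add)
    then show ?thesis
      by (simp add: leibniz_defect_comp_derivation[OF d, abs_def])
  qed
  moreover have "\<forall>x y. d (D (x + y)) = d (D x) + d (D y)"
    using Suc.prems d by (auto simp: derivs_Suc_iff derivation_add)
  ultimately show ?case
    unfolding derivs_Suc_iff by blast
qed

lemma foldr_comp_Cons: "foldr (\<circ>) (d # ds) id = (\<lambda>y. d (foldr (\<circ>) ds id y))"
  by (simp add: fun_eq_iff)

lemma foldr_comp_derivations_in_derivs: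
  "\<forall>e\<in>set (d # ds). is_derivation e \<Longrightarrow> foldr (\<circ>) (d # ds) id \<in> derivs (length (d # ds))"
proof (induction ds arbitrary: d)
  case Nil
  then show ?case by (simp add: derivation_in_derivs_1[unfolded One_nat_def])
next
  case (Cons e ds)
  have "foldr (\<circ>) (e # ds) id \<in> derivs (length (e # ds))"
    using Cons.prems by (intro Cons.IH) simp
  then show ?case
    unfolding foldr_comp_Cons[of d] length_Cons[of d]
    by (rule derivation_comp_derivs[rotated]) (use Cons.prems in simp)
qed

fun iterated_defect :: "'a::comm_ring_1 \<Rightarrow> nat \<Rightarrow> ('a \<Rightarrow> 'a) \<Rightarrow> 'a \<Rightarrow> 'a" where
  "iterated_defect x 0 D = D"
| "iterated_defect x (Suc j) D = leibniz_defect (iterated_defect x j D) x"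

lemma iterated_defect_Suc_right: "iterated_defect x (Suc j) D = iterated_defect x j (leibniz_defect D x)"
  by (induction j) auto

lemma iterated_defect_derivs: "D \<in> derivs m \<Longrightarrow> iterated_defect x m D = (\<lambda>_. 0)"
proof (induction m arbitrary: D)
  case (Suc m)
  then show ?case by (simp only: iterated_defect_Suc_right) (simp add: derivs_Suc_iff)
qed simp

lemma iterated_defect_comp_derivation:
  assumes d: "is_derivation d"
  shows "iterated_defect x (Suc j) (\<lambda>y. d (F y)) y = iterated_defect x j F x * d y
     + of_nat (Suc j) * d x * iterated_defect x j F y + d (iterated_defect x (Suc j) F y)"
proof (induction j arbitrary: y)
  case 0
  then show ?case by (simp add: leibniz_defect_comp_derivation[OF d])
next
  case (Suc j)
  let ?G = "iterated_defect x j F" and ?H = "iterated_defect x (Suc j) F"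
  have "iterated_defect x (Suc j) (\<lambda>y. d (F y))
      = (\<lambda>y. ?G x * d y + of_nat (Suc j) * d x * ?G y + d (?H y))"
    by (rule ext) (rule Suc.IH)
  then have "iterated_defect x (Suc (Suc j)) (\<lambda>y. d (F y)) y
      = leibniz_defect (\<lambda>y. ?G x * d y + of_nat (Suc j) * d x * ?G y + d (?H y)) x y"
    by (simp only: iterated_defect.simps(2))
  also have "\<dots> = ?G x * leibniz_defect d x y + of_nat (Suc j) * d x * leibniz_defect ?G x y
        + (?H x * d y + d x * ?H y + d (leibniz_defect ?H x y))"
    by (simp only: leibniz_defect_add leibniz_defect_scale mult.assoc
        leibniz_defect_comp_derivation[OF d])
  finally show ?case
    by (simp add: leibniz_defect_derivation[OF d] algebra_simps)
qed

text \<open>Only the top term survives because the inner composite lies in \<open>\<D>\<^sup>m\<^sup>+\<^sup>1(R)\<close>,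
  so its \<open>(m + 1)\<close>-fold defect vanishes.\<close>

lemma iterated_defect_foldr_comp:
  assumes "\<forall>e\<in>set (d # ds). is_derivation e"
  shows "iterated_defect x (length ds) (foldr (\<circ>) (d # ds) id) x
      = fact (Suc (length ds)) * (\<Prod>e\<leftarrow>d # ds. e x)"
  using assms
proof (induction ds arbitrary: d)
  case Nil
  then show ?case by simp
next
  case (Cons e ds)
  define F where "F = foldr (\<circ>) (e # ds) id"
  have d: "is_derivation d" using Cons.prems by simp
  have "F \<in> derivs (Suc (length ds))"
    using foldr_comp_derivations_in_derivs[of e ds] Cons.prems by (simp add: F_def)
  then have "iterated_defect x (Suc (length ds)) F = (\<lambda>_. 0)"
    by (rule iterated_defect_derivs)
  then have top: "iterated_defect x (Suc (length ds)) (\<lambda>y. d (F y)) x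
      = of_nat (Suc (Suc (length ds))) * d x * iterated_defect x (length ds) F x"
    unfolding iterated_defect_comp_derivation[OF d]
    by (simp add: derivation_zero[OF d] algebra_simps del: iterated_defect.simps)
  have IH: "iterated_defect x (length ds) F x = fact (Suc (length ds)) * (\<Prod>f\<leftarrow>e # ds. f x)"
    unfolding F_def using Cons.prems by (intro Cons.IH) simp
  show ?case
    unfolding foldr_comp_Cons[of d] F_def[symmetric] length_Cons top IH
    by (simp add: algebra_simps del: of_nat_Suc)
qed

lemma additive_of_nat_mult:
  assumes "\<And>x y. f (x + y) = f x + f y"
  shows "f (of_nat t * a) = of_nat t * (f a :: 'b::ring_1)"
proof (induction t)
  case 0
  show ?case using assms[of 0 0] by simp
next
  case (Suc t)
  then show ?case by (simp add: assms algebra_simps)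
qed

lemma finite_of_nat_line_zeros:
  fixes b c :: "'a::{idom, ring_char_0}"
  assumes "b \<noteq> 0 \<or> c \<noteq> 0"
  shows "finite {t::nat. c + of_nat t * b = 0}"
proof (cases "b = 0")
  case True
  then show ?thesis using assms by simp
next
  case False
  then have "inj (\<lambda>t::nat. of_nat t * b)"
    by (auto intro: injI)
  then have "finite ((\<lambda>t::nat. of_nat t * b) -` {- c})"
    by (intro finite_vimageI) simp_all
  then show ?thesis
    by (simp add: vimage_def eq_neg_iff_add_eq_0 add.commute)
qed

text \<open>If \<open>x\<close> avoids the zeros of \<open>f\<^sub>0, \<dots>, f\<^sub>n\<^sub>-\<^sub>1\<close> and \<open>f\<^sub>n(a) \<noteq> 0\<close>, each \<open>f\<^sub>i\<close> has only finitely
  many zeros on the line \<open>x + t a\<close>, \<open>t \<in> \<nat>\<close>.\<close>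

lemma additive_maps_common_nonzero:
  fixes f :: "nat \<Rightarrow> 'a::semiring_1 \<Rightarrow> 'b::{idom, ring_char_0}"
  assumes "\<And>i x y. i < n \<Longrightarrow> f i (x + y) = f i x + f i y"
    and "\<And>i. i < n \<Longrightarrow> f i \<noteq> (\<lambda>_. 0)"
  shows "\<exists>x. \<forall>i<n. f i x \<noteq> 0"
  using assms
proof (induction n)
  case 0
  then show ?case by simp
next
  case (Suc n)
  then obtain x where x: "\<forall>i<n. f i x \<noteq> 0" by auto
  obtain a where a: "f n a \<noteq> 0" using Suc.prems(2)[of n] by auto
  have "finite (\<Union>i<Suc n. {t::nat. f i x + of_nat t * f i a = 0})"
    using x a by (auto intro!: finite_of_nat_line_zeros simp: less_Suc_eq)
  then obtain t where t: "t \<notin> (\<Union>i<Suc n. {t::nat. f i x + of_nat t * f i a = 0})"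
    using ex_new_if_finite[OF infinite_UNIV_nat] by blast
  have "f i (x + of_nat t * a) = f i x + of_nat t * f i a" if "i < Suc n" for i
    using Suc.prems(1)[OF that] additive_of_nat_mult[of "f i"] that by simp
  with t have "\<forall>i<Suc n. f i (x + of_nat t * a) \<noteq> 0"
    by auto
  then show ?case by blast
qed

theorem theorem1p2:
  fixes d :: "nat \<Rightarrow> ('a::{idom, ring_char_0} \<Rightarrow> 'a)" and n :: nat
  assumes "n \<ge> 1"
    and "\<And>i. i < n \<Longrightarrow> is_derivation (d i)"
    and "\<And>i. i < n \<Longrightarrow> d i \<noteq> (\<lambda>x. 0)"
  shows "foldr (\<circ>) (map d [0..<n]) id \<in> derivs n
       \<and> foldr (\<circ>) (map d [0..<n]) id \<notin> derivs (n - 1)"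
proof -
  obtain m where n: "n = Suc m"
    using assms(1) by (cases n) auto
  obtain e es where es: "map d [0..<n] = e # es"
    using n by (cases "map d [0..<n]") auto
  have len: "length es = m"
    using arg_cong[OF es, of length] n by simp
  have der: "\<forall>f\<in>set (e # es). is_derivation f"
    using assms(2) by (auto simp flip: es)
  obtain x where x: "\<forall>i<n. d i x \<noteq> 0"
    using additive_maps_common_nonzero[of n d] assms(2,3) by (auto simp: is_derivation_def)
  have "(\<Prod>f\<leftarrow>e # es. f x) \<noteq> 0"
    using x by (auto simp: prod_list_zero_iff simp flip: es)
  then have "iterated_defect x m (foldr (\<circ>) (e # es) id) x \<noteq> 0"
    using iterated_defect_foldr_comp[OF der, of x] len by (simp del: fact_Suc)
  then have "foldr (\<circ>) (e # es) id \<notin> derivs m"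
    by (metis iterated_defect_derivs)
  moreover have "foldr (\<circ>) (e # es) id \<in> derivs n"
    using foldr_comp_derivations_in_derivs[OF der] len n by simp
  ultimately show ?thesis
    unfolding es by (simp add: n)
qed

end
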